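(* Let $G$ be a graph containing a subgraph $F$ isomorphic to $F_4$, with vertices labelled $u_0,u_1,u_2,u_3$ as described in the context and $U=\{u_1,u_2,u_3\}$, and let $T$ be a triangle of $G$ vertex-disjoint from $F$. If $d(u_{3},T)\geq 2$, or if $e(U,V(T))\geq 6$ and $d(u_{3},T)>0$, then $G[V(T)\cup V(F)]$ contains a triangle and a quadrilateral that are vertex-disjoint.
   Context: All graphs are finite, simple and undirected. $F_4$ denotes the graph with $4$ vertices and $4$ edges not containing a $4$-cycle, i.e. a claw (star $K_{1,3}$) with one additional edge joining two of its leaves (a triangle with a pendant edge). In a copy of $F_4$, $u_0$ denotes its unique vertex of degree $3$ in $F_4$, $u_1,u_2$ its two vertices of degree $2$ in $F_4$, and $u_3$ its unique vertex of degree $1$ in $F_4$ (so $F_4$ has edges $u_0u_1,u_0u_2,u_1u_2,u_0u_3$). For a vertex $v$ and subgraph $H$, $d(v,H)$ is the number of neighbours of $v$ in $G$ lying in $V(H)$; for disjoint vertex sets $L,M$, $e(L,M)$ is the number of edges of $G$ between $L$ and $M$. $G[W]$ is the subgraph induced by $W$. *)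

theory Defs
  imports Main
begin

definition simple_graph :: "'a set \<Rightarrow> ('a \<Rightarrow> 'a \<Rightarrow> bool) \<Rightarrow> bool" where
  "simple_graph V E \<longleftrightarrow> finite V \<and> (\<forall>x y. E x y \<longrightarrow> E y x) \<and> (\<forall>x. \<not> E x x)
     \<and> (\<forall>x y. E x y \<longrightarrow> x \<in> V \<and> y \<in> V)"

definition deg_in :: "('a \<Rightarrow> 'a \<Rightarrow> bool) \<Rightarrow> 'a \<Rightarrow> 'a set \<Rightarrow> nat" where
  "deg_in E v S = card {w \<in> S. E v w}"

definition edges_between :: "('a \<Rightarrow> 'a \<Rightarrow> bool) \<Rightarrow> 'a set \<Rightarrow> 'a set \<Rightarrow> nat" where
  "edges_between E L M = card {(x, y). x \<in> L \<and> y \<in> M \<and> E x y}"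

definition triangle_in :: "('a \<Rightarrow> 'a \<Rightarrow> bool) \<Rightarrow> 'a set \<Rightarrow> 'a \<Rightarrow> 'a \<Rightarrow> 'a \<Rightarrow> bool" where
  "triangle_in E W a b c \<longleftrightarrow> a \<in> W \<and> b \<in> W \<and> c \<in> W \<and>
     a \<noteq> b \<and> a \<noteq> c \<and> b \<noteq> c \<and> E a b \<and> E b c \<and> E a c"

definition quad_in :: "('a \<Rightarrow> 'a \<Rightarrow> bool) \<Rightarrow> 'a set \<Rightarrow> 'a \<Rightarrow> 'a \<Rightarrow> 'a \<Rightarrow> 'a \<Rightarrow> bool" where
  "quad_in E W a b c d \<longleftrightarrow> a \<in> W \<and> b \<in> W \<and> c \<in> W \<and> d \<in> W \<and>
     distinct [a, b, c, d] \<and> E a b \<and> E b c \<and> E c d \<and> E d a"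

end

theory Submission
  imports Defs
begin

text \<open>If the pendant vertex u3 sees two vertices of T, then u0 u1 u2 is a triangle and
u3 together with T spans a 4-cycle. Otherwise u3 sees exactly one vertex t of T, and u1, u2
send at least five edges to T; so one of them sees the two vertices of T other than t,
forming a triangle with them, while the other one sees t and closes the 4-cycle
u0 u3 t (u1 or u2).\<close>

definition disjoint_triangle_quad :: "('a \<Rightarrow> 'a \<Rightarrow> bool) \<Rightarrow> 'a set \<Rightarrow> bool" where
  "disjoint_triangle_quad E W \<longleftrightarrow>
     (\<exists>a b c p q r s. triangle_in E W a b c \<and> quad_in E W p q r s \<and> {a, b, c} \<inter> {p, q, r, s} = {})"

lemma deg_in_eq_sum: "finite S \<Longrightarrow> deg_in E v S = (\<Sum>w\<in>S. of_bool (E v w))"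
  by (simp add: deg_in_def sum_of_bool_eq Int_def conj_commute)

lemma edges_between_eq_sum_deg_in:
  assumes "finite L" "finite M"
  shows "edges_between E L M = (\<Sum>x\<in>L. deg_in E x M)"
proof -
  have "{(x, y). x \<in> L \<and> y \<in> M \<and> E x y} = Sigma L (\<lambda>x. {w \<in> M. E x w})"
    by auto
  then show ?thesis
    using assms by (simp add: edges_between_def deg_in_def card_SigmaI)
qed

lemma disjoint_triangle_quad_if_two_neighbours_in_triangle:
  assumes "symp E" "triangle_in E W a b c" "triangle_in E W t1 t2 t3" "x \<in> W"
    and "distinct [a, b, c, x, t1, t2, t3]" "E x t1" "E x t2"
  shows "disjoint_triangle_quad E W"
  unfolding disjoint_triangle_quad_def
proof (intro exI conjI)
  show "triangle_in E W a b c" by fact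
  show "quad_in E W x t1 t3 t2"
    using assms by (auto simp: triangle_in_def quad_in_def dest: sympD)
  show "{a, b, c} \<inter> {x, t1, t3, t2} = {}"
    using assms(5) by auto
qed

lemma disjoint_triangle_quad_if_quad_through_triangle_vertex:
  assumes "symp E" "triangle_in E W t1 t2 t3" "{u, v, y, x} \<subseteq> W"
    and "distinct [u, v, y, x, t1, t2, t3]"
    and "E u v" "E u y" "E v t1" "E y t1" "E x t2" "E x t3"
  shows "disjoint_triangle_quad E W"
  unfolding disjoint_triangle_quad_def
proof (intro exI conjI)
  show "triangle_in E W x t2 t3"
    using assms by (auto simp: triangle_in_def)
  show "quad_in E W u v t1 y"
    using assms by (auto simp: triangle_in_def quad_in_def dest: sympD)
  show "{x, t2, t3} \<inter> {u, v, t1, y} = {}"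
    using assms(4) by auto
qed

lemma disjoint_triangle_quad_if_pendant_sees_triangle:
  assumes sym: "symp E"
    and dist: "distinct [u0, u1, u2, u3, t1, t2, t3]"
    and F_edges: "E u0 u1" "E u0 u2" "E u1 u2" "E u0 u3"
    and T_edges: "E t1 t2" "E t2 t3" "E t1 t3"
    and pendant: "E u3 t1"
    and hyp: "deg_in E u3 {t1, t2, t3} \<ge> 2 \<or>
              (edges_between E {u1, u2, u3} {t1, t2, t3} \<ge> 6 \<and> deg_in E u3 {t1, t2, t3} > 0)"
  shows "disjoint_triangle_quad E ({t1, t2, t3} \<union> {u0, u1, u2, u3})"
    (is "disjoint_triangle_quad E ?W")
proof -
  have T: "triangle_in E ?W t1 t2 t3" "triangle_in E ?W t1 t3 t2"
    using dist T_edges sympD[OF sym] by (auto simp: triangle_in_def)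
  have F: "triangle_in E ?W u0 u1 u2"
    using dist F_edges by (auto simp: triangle_in_def)
  have deg: "deg_in E v {t1, t2, t3} = of_bool (E v t1) + of_bool (E v t2) + of_bool (E v t3)"
    for v using dist by (simp add: deg_in_eq_sum)
  consider "E u3 t2" | "E u3 t3"
    | "edges_between E {u1, u2, u3} {t1, t2, t3} \<ge> 6" "\<not> E u3 t2" "\<not> E u3 t3"
    using hyp pendant by (cases "E u3 t2"; cases "E u3 t3"; auto simp: deg)
  then show ?thesis
  proof cases
    case 1
    then show ?thesis
      using disjoint_triangle_quad_if_two_neighbours_in_triangle[OF sym F T(1)] dist pendant
      by auto
  next
    case 2
    then show ?thesis
      using disjoint_triangle_quad_if_two_neighbours_in_triangle[OF sym F T(2)] dist pendant
      by auto
  next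
    case 3
    then have five: "of_bool (E u1 t1) + of_bool (E u1 t2) + of_bool (E u1 t3)
        + of_bool (E u2 t1) + of_bool (E u2 t2) + of_bool (E u2 t3) \<ge> (5::nat)"
      using dist pendant by (simp add: edges_between_eq_sum_deg_in deg)
    have "(E u1 t2 \<and> E u1 t3 \<and> E u2 t1) \<or> (E u2 t2 \<and> E u2 t3 \<and> E u1 t1)"
      using five by (cases "E u1 t1"; cases "E u1 t2"; cases "E u1 t3";
          cases "E u2 t1"; cases "E u2 t2"; cases "E u2 t3"; simp)
    then show ?thesis
      using disjoint_triangle_quad_if_quad_through_triangle_vertex[OF sym T(1), of u0 u3]
        dist F_edges pendant by auto
  qed
qed

theorem lemma8:
  fixes V :: "'a set" and E :: "'a \<Rightarrow> 'a \<Rightarrow> bool"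
    and u0 u1 u2 u3 t1 t2 t3 :: 'a
  assumes G: "simple_graph V E"
    and F_verts: "u0 \<in> V" "u1 \<in> V" "u2 \<in> V" "u3 \<in> V" "distinct [u0, u1, u2, u3]"
    and F_edges: "E u0 u1" "E u0 u2" "E u1 u2" "E u0 u3"
    and T: "triangle_in E V t1 t2 t3"
    and disj: "{t1, t2, t3} \<inter> {u0, u1, u2, u3} = {}"
    and hyp: "deg_in E u3 {t1, t2, t3} \<ge> 2 \<or>
              (edges_between E {u1, u2, u3} {t1, t2, t3} \<ge> 6 \<and> deg_in E u3 {t1, t2, t3} > 0)"
  shows "\<exists>a b c p q r s. triangle_in E ({t1, t2, t3} \<union> {u0, u1, u2, u3}) a b c
           \<and> quad_in E ({t1, t2, t3} \<union> {u0, u1, u2, u3}) p q r s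
           \<and> {a, b, c} \<inter> {p, q, r, s} = {}"
proof -
  have sym: "symp E"
    using G by (auto simp: simple_graph_def symp_def)
  have "deg_in E u3 {t1, t2, t3} > 0"
    using hyp by auto
  then obtain t where "t \<in> {t1, t2, t3}" "E u3 t"
    by (auto simp: deg_in_def card_gt_0_iff)
  \<comment> \<open>Both the hypothesis and the conclusion only depend on the set of T, so T may be relabelled to start at t.\<close>
  then obtain t' t'' where T': "{t1, t2, t3} = {t, t', t''}" "triangle_in E V t t' t''" "E u3 t"
    using T sympD[OF sym] by (auto simp: triangle_in_def insert_commute)
  have "distinct [u0, u1, u2, u3, t, t', t'']"
    using F_verts(5) disj T'(1,2) by (auto simp: triangle_in_def)
  then have "disjoint_triangle_quad E ({t, t', t''} \<union> {u0, u1, u2, u3})"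
    using disjoint_triangle_quad_if_pendant_sees_triangle[OF sym _ F_edges] T' hyp
    by (auto simp: triangle_in_def)
  then show ?thesis
    by (simp add: disjoint_triangle_quad_def T'(1))
qed

end
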